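(* For $(n,m) \in \mathbb{Z}^2$ let $q_{(n,m)}(x) = x^4 + n x^3 + m x^2 + n x + 1$, and let $Q = \{(n,m) \in \mathbb{Z}^2 : q_{(n,m)} \text{ has no real root}\}$. Then $\rho(Q) = 0$, where for $L \subseteq \mathbb{Z}^2$ $$\rho(L) = \limsup_{K \to \infty} \frac{|\{(n,m) \in L : \|(n,m)\| \le K\}|}{|\{(n,m) \in \mathbb{Z}^2 : \|(n,m)\| \le K\}|}, \qquad \|(n,m)\| = \max\{|n|,|m|\}.$$ *)

theory Defs
  imports "HOL-Analysis.Analysis"
begin

definition q :: "int \<times> int \<Rightarrow> real \<Rightarrow> real" where
  "q nm x = x^4 + of_int (fst nm) * x^3 + of_int (snd nm) * x^2 + of_int (fst nm) * x + 1"

definition Q :: "(int \<times> int) set" where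
  "Q = {nm. \<not> (\<exists>x::real. q nm x = 0)}"

definition maxnorm :: "int \<times> int \<Rightarrow> int" where
  "maxnorm nm = max \<bar>fst nm\<bar> \<bar>snd nm\<bar>"

definition box :: "real \<Rightarrow> (int \<times> int) set" where
  "box K = {nm. real_of_int (maxnorm nm) \<le> K}"

definition rho :: "(int \<times> int) set \<Rightarrow> ereal" where
  "rho L = Limsup at_top (\<lambda>K::real. ereal (real (card (L \<inter> box K)) / real (card (box K))))"
end

theory Submission
  imports Defs "HOL-Real_Asymp.Real_Asymp"
begin

text \<open>A quartic without real roots is positive everywhere, since q(0) = 1.
  Evaluating at x = -n/2 gives n^2 (n^2 - 4m + 8) < 16, hence n^2 \<le> 4m + 8.
  So among the pairs with max(|n|, |m|) \<le> K only O(sqrt K) values of n are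
  possible, while the box contains about 4K^2 pairs; the density tends to 0.\<close>

lemma continuous_pos_if_no_root:
  fixes f :: "real \<Rightarrow> real"
  assumes "\<And>x. isCont f x" and "f 0 > 0" and "\<And>x. f x \<noteq> 0"
  shows "f x > 0"
proof (rule ccontr)
  assume "\<not> f x > 0"
  then have "f x \<le> 0" by simp
  then have "\<exists>y. f y = 0"
    using IVT2[of f x 0 0] IVT[of f x 0 0] assms(1,2)
    by (cases "x \<le> 0") (auto simp: less_imp_le)
  then show False using assms(3) by blast
qed

lemma isCont_q: "isCont (q nm) x"
  unfolding q_def by (intro continuous_intros)

lemma q_pos_if_in_Q:
  assumes "nm \<in> Q" shows "q nm x > 0"
proof (rule continuous_pos_if_no_root[of "q nm"])
  show "isCont (q nm) y" for y by (rule isCont_q)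
  show "q nm 0 > 0" by (simp add: q_def)
  show "q nm y \<noteq> 0" for y using assms by (simp add: Q_def)
qed

lemma sq_le_if_in_Q:
  assumes "(n, m) \<in> Q" shows "n\<^sup>2 \<le> 4 * m + 8"
proof (cases "n = 0")
  case True
  have "q (n, m) 1 > 0" using q_pos_if_in_Q[OF assms] .
  then show ?thesis using True by (simp add: q_def)
next
  case False
  have "q (n, m) (- of_int n / 2) > 0" using q_pos_if_in_Q[OF assms] .
  then have "real_of_int (n\<^sup>2 * (n\<^sup>2 - 4 * m + 8)) < 16"
    by (simp add: q_def field_simps power_def)
  then have bound: "n\<^sup>2 * (n\<^sup>2 - 4 * m + 8) < 16" by linarith
  have "n\<^sup>2 \<ge> 1" using False by (simp add: int_one_le_iff_zero_less)
  show ?thesis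
  proof (rule ccontr)
    assume "\<not> ?thesis"
    then have "n\<^sup>2 * 16 \<le> n\<^sup>2 * (n\<^sup>2 - 4 * m + 8)" by (intro mult_left_mono) auto
    with bound \<open>n\<^sup>2 \<ge> 1\<close> show False by linarith
  qed
qed

definition int_ball :: "real \<Rightarrow> int set" where
  "int_ball r = {n. real_of_int \<bar>n\<bar> \<le> r}"

lemma int_ball_eq: "int_ball r = {-\<lfloor>r\<rfloor>..\<lfloor>r\<rfloor>}"
proof (rule set_eqI)
  fix n :: int
  have "-n \<le> \<lfloor>r\<rfloor> \<longleftrightarrow> real_of_int (-n) \<le> r" "n \<le> \<lfloor>r\<rfloor> \<longleftrightarrow> real_of_int n \<le> r"
    by (rule le_floor_iff)+
  then show "n \<in> int_ball r \<longleftrightarrow> n \<in> {-\<lfloor>r\<rfloor>..\<lfloor>r\<rfloor>}"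
    unfolding int_ball_def by (auto simp: abs_le_iff)
qed

lemma card_int_ball: "r \<ge> 0 \<Longrightarrow> real (card (int_ball r)) = 2 * of_int \<lfloor>r\<rfloor> + 1"
  by (simp add: int_ball_eq)

lemma box_eq_int_ball_Times: "box K = int_ball K \<times> int_ball K"
  unfolding box_def int_ball_def maxnorm_def by auto

lemma Q_inter_box_subset:
  "Q \<inter> box K \<subseteq> int_ball (sqrt (4 * K + 8)) \<times> int_ball K"
proof safe
  fix n m assume nm: "(n, m) \<in> Q" "(n, m) \<in> box K"
  then have "real_of_int m \<le> K" by (auto simp: box_eq_int_ball_Times int_ball_def)
  moreover have "real_of_int (n\<^sup>2) \<le> 4 * real_of_int m + 8"
    using sq_le_if_in_Q[OF nm(1)] by linarith
  ultimately have "(real_of_int \<bar>n\<bar>)\<^sup>2 \<le> 4 * K + 8" by simp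
  then show "n \<in> int_ball (sqrt (4 * K + 8))" by (simp add: int_ball_def real_le_rsqrt)
  show "m \<in> int_ball K" using nm(2) by (simp add: box_eq_int_ball_Times)
qed

lemma density_Q_box_le:
  assumes "K \<ge> 1"
  shows "real (card (Q \<inter> box K)) / real (card (box K))
    \<le> (2 * sqrt (4 * K + 8) + 1) / (2 * K - 1)"
proof -
  define s where "s = sqrt (4 * K + 8)"
  have "s \<ge> 0" using assms by (simp add: s_def)
  have "finite (int_ball s \<times> int_ball K)" by (simp add: int_ball_eq)
  then have "card (Q \<inter> box K) \<le> card (int_ball s \<times> int_ball K)"
    using Q_inter_box_subset[of K] by (simp add: card_mono s_def)
  then have "real (card (Q \<inter> box K)) \<le> real (card (int_ball s)) * real (card (int_ball K))"
    by (simp add: card_cartesian_product flip: of_nat_mult)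
  also have "\<dots> = (2 * of_int \<lfloor>s\<rfloor> + 1) * (2 * of_int \<lfloor>K\<rfloor> + 1)"
    using assms \<open>s \<ge> 0\<close> by (simp add: card_int_ball)
  finally have "real (card (Q \<inter> box K)) \<le> \<dots>" .
  moreover have "real (card (box K)) = (2 * of_int \<lfloor>K\<rfloor> + 1) * (2 * of_int \<lfloor>K\<rfloor> + 1)"
    using card_int_ball[of K] assms by (simp add: box_eq_int_ball_Times card_cartesian_product)
  moreover have "of_int \<lfloor>K\<rfloor> \<ge> (1::real)"
    using assms by (metis floor_mono floor_one of_int_1 of_int_le_iff)
  ultimately have "real (card (Q \<inter> box K)) / real (card (box K))
      \<le> (2 * of_int \<lfloor>s\<rfloor> + 1) / (2 * of_int \<lfloor>K\<rfloor> + 1)"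
    by (simp add: divide_simps)
  also have "\<dots> \<le> (2 * s + 1) / (2 * K - 1)"
    using \<open>s \<ge> 0\<close> assms of_int_floor_le[of s] real_of_int_floor_gt_diff_one[of K]
    by (intro frac_le) linarith+
  finally show ?thesis unfolding s_def .
qed

lemma rho_eq_0I:
  assumes "((\<lambda>K. real (card (L \<inter> box K)) / real (card (box K))) \<longlongrightarrow> 0) at_top"
  shows "rho L = 0"
proof -
  have "Limsup at_top (\<lambda>K. ereal (real (card (L \<inter> box K)) / real (card (box K)))) = ereal 0"
    using assms by (intro lim_imp_Limsup tendsto_ereal) auto
  then show ?thesis by (simp add: rho_def zero_ereal_def)
qed

theorem mainTheorem5:
  shows "rho Q = 0"
proof (rule rho_eq_0I)
  let ?density = "\<lambda>K. real (card (Q \<inter> box K)) / real (card (box K))"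
  let ?bound = "\<lambda>K::real. (2 * sqrt (4 * K + 8) + 1) / (2 * K - 1)"
  have bound_tendsto_0: "(?bound \<longlongrightarrow> 0) at_top" by real_asymp
  show "(?density \<longlongrightarrow> 0) at_top"
  proof (rule tendsto_sandwich[OF _ _ tendsto_const bound_tendsto_0])
    show "\<forall>\<^sub>F K in at_top. 0 \<le> ?density K" by simp
    show "\<forall>\<^sub>F K in at_top. ?density K \<le> ?bound K"
      using eventually_ge_at_top[of "1::real"] by eventually_elim (rule density_Q_box_le)
  qed
qed

end
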